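(* Suppose the event $E_{\tau,small}$ described in the context occurs. Let $\kappa_g>0$ be an upper bound for $\{\|g_k\|_2\}$. Then, with $\kappa_d>0$ as in the context, for any $k \geq \bar k_{\tau,\xi}$, \[ \mathbb{E}_k[\bar\alpha_k \bar\tau_k g_k^T (\bar d_k - d_k)] \leq \beta_k^2\, \theta\, \bar\tau_{\min}\, \kappa_g\, \kappa_d \sqrt{M}. \]
   Context: Problem: $\min_{x\in\mathbb{R}^n} f(x)$ s.t. $c(x)=0$, with $f(x)=\mathbb{E}[F(x,\omega)]$, $c:\mathbb{R}^n\to\mathbb{R}^m$ deterministic. Assumptions: there is an open convex set $\mathcal{X}$ containing all iterates and trial points; $f$ is continuously differentiable and bounded below over $\mathcal{X}$, $\nabla f$ is bounded and Lipschitz with constant $L$ over $\mathcal{X}$; $c$ and its Jacobian $J=\nabla c^T$ are bounded over $\mathcal{X}$, each $\nabla c_i$ is Lipschitz with constant $\gamma_i$, $\Gamma:=\sum_{i=1}^m\gamma_i$, and the singular values of $J$ are bounded away from zero over $\mathcal{X}$. The deterministic matrices $H_k\in\mathbb{S}^n$ satisfy $\|H_k\|_2\le\kappa_H$ and $u^TH_ku\ge\zeta\|u\|_2^2$ for all $u$ with $J_ku=0$. Notation: $g_k=\nabla f(x_k)$, $c_k=c(x_k)$, $J_k=\nabla c(x_k)^T$; $\bar g_k$ is a stochastic gradient estimate. Model reduction $\Delta q(x,\tau,g,H,d)=-\tau(g^Td+\tfrac12\max\{d^THd,0\})+\|c(x)\|_1$. Algorithm (stochastic SQP, inputs $\bar\tau_{-1},\bar\xi_{-1}>0$,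 $\epsilon,\sigma\in(0,1)$, $\{\beta_k\}\subset(0,1]$, $\theta\ge0$, Lipschitz constants $L,\Gamma$): at iteration $k$, solve $\begin{bmatrix}H_k & J_k^T\\ J_k & 0\end{bmatrix}\begin{bmatrix}\bar d_k\\ \bar y_k\end{bmatrix}=-\begin{bmatrix}\bar g_k\\ c_k\end{bmatrix}$. Set $\bar\tau_k^{trial}=\infty$ if $\bar g_k^T\bar d_k+\max\{\bar d_k^TH_k\bar d_k,0\}\le0$, else $(1-\sigma)\|c_k\|_1/(\bar g_k^T\bar d_k+\max\{\bar d_k^TH_k\bar d_k,0\})$; $\bar\tau_k=\bar\tau_{k-1}$ if $\bar\tau_{k-1}\le\bar\tau_k^{trial}$, else $(1-\epsilon)\bar\tau_k^{trial}$. Set $\bar\xi_k^{trial}=\Delta q(x_k,\bar\tau_k,\bar g_k,H_k,\bar d_k)/(\bar\tau_k\|\bar d_k\|_2^2)$, $\bar\xi_k=\bar\xi_{k-1}$ if $\bar\xi_{k-1}\le\bar\xi_k^{trial}$, else $(1-\epsilon)\bar\xi_k^{trial}$. The stepsize $\bar\alpha_k$ is chosen (by projecting candidate values $\beta_k\Delta q(x_k,\bar\tau_k,\bar g_k,H_k,\bar d_k)/((\bar\tau_kL+\Gamma)\|\bar d_k\|_2^2)$ and that value minus $4\|c_k\|_1/((\bar\tau_kL+\Gamma)\|\bar d_k\|_2^2)$, and selecting among them or $1$) so that it always lies in $[\bar\alpha_{k,\min},\bar\alpha_{k,\max}]=[\beta_k\bar\xi_k\bar\tau_k/(\bar\tau_kL+\Gamma),\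 \beta_k\bar\xi_k\bar\tau_k/(\bar\tau_kL+\Gamma)+\theta\beta_k^2]$; $x_{k+1}=x_k+\bar\alpha_k\bar d_k$. The deterministic direction $d_k$ solves the same linear system with $g_k$ in place of $\bar g_k$, and $\tau_k^{trial}$ is the trial formula with $(g_k,d_k)$. Event $E_{\tau,small}$: there exist $\bar k_{\tau,\xi}\in\mathbb{N}$, $\bar\tau_{\min}>0$ with $\bar\tau_k=\bar\tau_{\min}\le\tau_k^{trial}$ and $\bar\xi_k=\bar\xi_{\min}$ for all $k\ge\bar k_{\tau,\xi}$; and $\mathbb{E}_k$ denotes expectation conditioned on this event and on the algorithm reaching $x_k$, with $\mathbb{E}_k[\bar g_k]=g_k$, $\mathbb{E}_k[\|\bar g_k-g_k\|_2^2]\le M$. $\kappa_d>0$ is an upper bound (independent of $k$) on the norm of the inverse of $\begin{bmatrix}H_k & J_k^T\\ J_k & 0\end{bmatrix}$, giving $\mathbb{E}_k[\|\bar d_k-d_k\|_2]\le\kappa_d\sqrt M$. *)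

theory Defs
  imports "HOL-Analysis.Analysis" "HOL-Probability.Probability"
begin

definition norm1 :: "real ^ 'm \<Rightarrow> real" where
  "norm1 v = (\<Sum>i\<in>UNIV. \<bar>v $ i\<bar>)"

definition model_red :: "real ^ 'm \<Rightarrow> real \<Rightarrow> real ^ 'n \<Rightarrow> real ^ 'n ^ 'n \<Rightarrow> real ^ 'n \<Rightarrow> real" where
  "model_red c tau g H d = - tau * (g \<bullet> d + (1/2) * max (d \<bullet> (H *v d)) 0) + norm1 c"

definition tau_trial :: "real \<Rightarrow> real ^ 'm \<Rightarrow> real ^ 'n \<Rightarrow> real ^ 'n ^ 'n \<Rightarrow> real ^ 'n \<Rightarrow> ereal" where
  "tau_trial sgm c g H d =
     (if g \<bullet> d + max (d \<bullet> (H *v d)) 0 \<le> 0 then \<infinity>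
      else ereal ((1 - sgm) * norm1 c / (g \<bullet> d + max (d \<bullet> (H *v d)) 0)))"

end

theory Submission
  imports Defs
begin

text \<open>Subtracting the two KKT systems shows that \<open>dbar - d\<close> is the image of \<open>gbar - g\<close> under a
fixed linear map, and that \<open>\<parallel>dbar - d\<parallel> \<le> kappa_d \<parallel>gbar - g\<parallel>\<close>. Hence \<open>g \<bullet> (dbar - d)\<close> has mean zero
and is bounded by \<open>kappa_g kappa_d \<parallel>gbar - g\<parallel>\<close>. Writing the step size as the deterministic lower end
of its interval plus a part in \<open>[0, theta beta\<^sup>2]\<close>, the first part contributes nothing in expectation,
and the second is controlled by \<open>E \<parallel>gbar - g\<parallel> \<le> sqrt M\<close>.\<close>

definition kkt_op :: "real ^ 'n ^ 'n \<Rightarrow> real ^ 'n ^ 'm \<Rightarrow> (real ^ 'n) \<times> (real ^ 'm) \<Rightarrow> (real ^ 'n) \<times> (real ^ 'm)"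
  where "kkt_op H J p = (H *v fst p + transpose J *v snd p, J *v fst p)"

definition kkt_solution :: "real ^ 'n ^ 'n \<Rightarrow> real ^ 'n ^ 'm \<Rightarrow> real ^ 'm \<Rightarrow> real ^ 'n \<Rightarrow> real ^ 'n \<Rightarrow> real ^ 'm \<Rightarrow> bool"
  where "kkt_solution H J c g d y \<longleftrightarrow> H *v d + transpose J *v y = - g \<and> J *v d = - c"

lemma linear_kkt_op: "linear (kkt_op H J)"
  unfolding kkt_op_def linear_iff by (auto simp: algebra_simps)

lemma kkt_op_diff:
  assumes "kkt_solution H J c g1 d1 y1" "kkt_solution H J c g2 d2 y2"
  shows "kkt_op H J (d1 - d2, y1 - y2) = (g2 - g1, 0)"
  using assms unfolding kkt_op_def kkt_solution_def
  by (simp add: matrix_vector_mult_diff_distrib algebra_simps)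

lemma kkt_step_diff_le:
  assumes bounded_inv: "\<And>p. norm p \<le> kappa * norm (kkt_op H J p)"
    and "kkt_solution H J c g1 d1 y1" "kkt_solution H J c g2 d2 y2"
  shows "norm (d1 - d2) \<le> kappa * norm (g1 - g2)"
proof -
  have "norm (d1 - d2) \<le> norm (d1 - d2, y1 - y2)"
    by (rule norm_fst_le)
  also have "\<dots> \<le> kappa * norm (g2 - g1, 0 :: real ^ 'm)"
    using bounded_inv[of "(d1 - d2, y1 - y2)"] kkt_op_diff[OF assms(2,3)] by simp
  finally show ?thesis
    by (simp add: norm_Pair norm_minus_commute)
qed

lemma kkt_step_diff_inner_le:
  assumes bounded_inv: "\<And>p. norm p \<le> kappa * norm (kkt_op H J p)"
    and "kkt_solution H J c g1 d1 y1" "kkt_solution H J c g2 d2 y2"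
    and "norm v \<le> kappa_v"
  shows "\<bar>v \<bullet> (d1 - d2)\<bar> \<le> kappa_v * kappa * norm (g1 - g2)"
proof -
  have "\<bar>v \<bullet> (d1 - d2)\<bar> \<le> norm v * norm (d1 - d2)"
    by (rule Cauchy_Schwarz_ineq2)
  also have "\<dots> \<le> kappa_v * (kappa * norm (g1 - g2))"
    using assms(4) kkt_step_diff_le[OF assms(1-3)] by (intro mult_mono) (auto intro: order_trans[OF norm_ge_zero])
  finally show ?thesis
    by (simp add: mult.assoc)
qed

lemma linear_inj_if_norm_le:
  assumes "linear f" "\<And>x. norm x \<le> C * norm (f x)"
  shows "inj f"
proof (rule injI)
  fix a b assume "f a = f b"
  then have "f (a - b) = 0"
    using linear_diff[OF \<open>linear f\<close>] by simp
  then show "a = b"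
    using assms(2)[of "a - b"] by simp
qed

lemma kkt_step_diff_linear:
  fixes H :: "real ^ 'n ^ 'n" and J :: "real ^ 'n ^ 'm"
  assumes bounded_inv: "\<And>p. norm p \<le> kappa * norm (kkt_op H J p)"
  obtains P :: "real ^ 'n \<Rightarrow> real ^ 'n" where "linear P"
    and "\<And>c g1 d1 y1 g2 d2 y2. kkt_solution H J c g1 d1 y1 \<Longrightarrow> kkt_solution H J c g2 d2 y2 \<Longrightarrow>
           d1 - d2 = P (g1 - g2)"
proof -
  have "inj (kkt_op H J)"
    by (rule linear_inj_if_norm_le[OF linear_kkt_op bounded_inv])
  then obtain K where K: "linear K" "K \<circ> kkt_op H J = id"
    using linear_injective_left_inverse[OF linear_kkt_op] by blast
  let ?P = "\<lambda>w. - fst (K (w, 0 :: real ^ 'm))"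
  have "linear ?P"
    using K(1) by (intro linear_compose_neg linear_compose[of "\<lambda>w. (w, 0)" "fst \<circ> K", unfolded o_def]
        linear_compose[of K fst, unfolded o_def] linear_fst) (auto simp: linear_iff)
  moreover have "d1 - d2 = ?P (g1 - g2)"
    if "kkt_solution H J c g1 d1 y1" "kkt_solution H J c g2 d2 y2" for c g1 d1 y1 g2 d2 y2
  proof -
    have "(d1 - d2, y1 - y2) = K (g2 - g1, 0)"
      using kkt_op_diff[OF that] K(2) by (metis comp_apply id_apply)
    also have "\<dots> = - K (g1 - g2, 0)"
      using linear_neg[OF K(1), of "(g1 - g2, 0)"] by simp
    finally show ?thesis
      by (metis fst_conv fst_uminus)
  qed
  ultimately show ?thesis
    by (rule that)
qed

lemma (in prob_space) expectation_le_sqrt_second_moment: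
  fixes X :: "'a \<Rightarrow> real"
  assumes "integrable M X" "integrable M (\<lambda>x. (X x)\<^sup>2)"
  shows "expectation X \<le> sqrt (expectation (\<lambda>x. (X x)\<^sup>2))"
  using variance_eq[OF assms] variance_positive[of X] by (intro real_le_rsqrt) linarith

lemma (in prob_space) linear_centered_integrable_mean_zero:
  fixes X :: "'a \<Rightarrow> 'b :: euclidean_space" and T :: "'b \<Rightarrow> real"
  assumes "integrable M X" "linear T"
  shows "integrable M (\<lambda>x. T (X x - expectation X))"
    and "expectation (\<lambda>x. T (X x - expectation X)) = 0"
proof -
  have T: "bounded_linear T"
    using \<open>linear T\<close> linear_conv_bounded_linear by blast
  have centered: "integrable M (\<lambda>x. X x - expectation X)"
    using assms(1) by simp
  show "integrable M (\<lambda>x. T (X x - expectation X))"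
    using integrable_bounded_linear[OF T centered] by simp
  have "expectation (\<lambda>x. X x - expectation X) = 0"
    using assms(1) by (simp add: prob_space)
  then show "expectation (\<lambda>x. T (X x - expectation X)) = 0"
    using integral_bounded_linear[OF T centered] linear_0[OF \<open>linear T\<close>] by (simp add: o_def)
qed

lemma (in prob_space) kkt_step_error_inner_mean_zero:
  fixes H :: "real ^ 'n ^ 'n" and J :: "real ^ 'n ^ 'm"
  assumes bounded_inv: "\<And>p. norm p \<le> kappa * norm (kkt_op H J p)"
    and "integrable M gbar"
    and "\<And>x. kkt_solution H J c (gbar x) (dbar x) (ybar x)"
    and "kkt_solution H J c (expectation gbar) d y"
  shows "integrable M (\<lambda>x. v \<bullet> (dbar x - d))"
    and "expectation (\<lambda>x. v \<bullet> (dbar x - d)) = 0"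
proof -
  obtain P where "linear P" and P: "\<And>x. dbar x - d = P (gbar x - expectation gbar)"
    using kkt_step_diff_linear[OF bounded_inv] assms(3,4) by metis
  have "linear (\<lambda>w. v \<bullet> P w)"
    using \<open>linear P\<close> unfolding linear_iff by (simp add: inner_add_right)
  from linear_centered_integrable_mean_zero[OF assms(2) this]
  show "integrable M (\<lambda>x. v \<bullet> (dbar x - d))" "expectation (\<lambda>x. v \<bullet> (dbar x - d)) = 0"
    by (simp_all add: P)
qed

lemma (in prob_space) integral_mult_mean_zero_le:
  fixes alpha F B :: "'a \<Rightarrow> real"
  assumes F: "integrable M F" "expectation F = 0"
    and B: "integrable M B" "\<And>x. \<bar>F x\<bar> \<le> B x"
    and alpha: "alpha \<in> borel_measurable M" "\<And>x. a \<le> alpha x \<and> alpha x \<le> a + e"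
  shows "expectation (\<lambda>x. alpha x * F x) \<le> e * expectation B"
proof -
  have width: "0 \<le> alpha x - a" "alpha x - a \<le> e" for x
    using alpha(2)[of x] by auto
  have abs_bound: "(alpha x - a) * \<bar>F x\<bar> \<le> e * B x" for x
    using width[of x] B(2)[of x] by (intro mult_mono) auto
  have bound: "(alpha x - a) * F x \<le> e * B x" for x
    using abs_bound[of x] mult_left_mono[OF abs_ge_self width(1)] by (rule order_trans[rotated])
  have "integrable M (\<lambda>x. (alpha x - a) * F x)"
  proof (rule Bochner_Integration.integrable_bound[OF integrable_mult_right[OF B(1), of e]])
    show "(\<lambda>x. (alpha x - a) * F x) \<in> borel_measurable M"
      using alpha(1) borel_measurable_integrable[OF F(1)] by measurable
    show "AE x in M. norm ((alpha x - a) * F x) \<le> norm (e * B x)"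
    proof (rule AE_I2)
      fix x
      have "norm ((alpha x - a) * F x) = (alpha x - a) * \<bar>F x\<bar>"
        using width(1) by (simp add: abs_mult)
      also have "\<dots> \<le> norm (e * B x)"
        using abs_bound[of x] by simp
      finally show "norm ((alpha x - a) * F x) \<le> norm (e * B x)" .
    qed
  qed
  moreover have "alpha x * F x = (alpha x - a) * F x + a * F x" for x
    by (simp add: algebra_simps)
  ultimately have "expectation (\<lambda>x. alpha x * F x) = expectation (\<lambda>x. (alpha x - a) * F x)"
    using F by simp
  also have "\<dots> \<le> expectation (\<lambda>x. e * B x)"
    using \<open>integrable M (\<lambda>x. (alpha x - a) * F x)\<close> B(1) bound by (intro integral_mono) auto
  finally show ?thesis by simp
qed

theorem lemma3p10:
  fixes M :: "'w measure"
    and H :: "real ^ 'n ^ 'n" and J :: "real ^ 'n ^ 'm" and c :: "real ^ 'm"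
    and g d :: "real ^ 'n" and y :: "real ^ 'm"
    and gbar dbar :: "'w \<Rightarrow> real ^ 'n" and ybar :: "'w \<Rightarrow> real ^ 'm"
    and alpha :: "'w \<Rightarrow> real"
    and L Gamma sgm epsilon beta theta tau_min xi_min kappa_H zeta kappa_g kappa_d Mv :: real
  assumes prob: "prob_space M"
    and gbar_meas: "gbar \<in> borel_measurable M"
    and gbar_int: "integrable M gbar"
    and gbar_unbiased: "(\<integral>\<omega>. gbar \<omega> \<partial>M) = g"
    and var_int: "integrable M (\<lambda>\<omega>. (norm (gbar \<omega> - g))\<^sup>2)"
    and var_bound: "(\<integral>\<omega>. (norm (gbar \<omega> - g))\<^sup>2 \<partial>M) \<le> Mv"
    and H_sym: "transpose H = H"
    and H_bound: "\<forall>u. norm (H *v u) \<le> kappa_H * norm u"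
    and H_curv: "zeta > 0" "\<forall>u. J *v u = 0 \<longrightarrow> zeta * (norm u)\<^sup>2 \<le> u \<bullet> (H *v u)"
    and kkt_inv: "kappa_d > 0"
      "\<forall>u v. norm (u, v) \<le> kappa_d * norm (H *v u + transpose J *v v, J *v u)"
    and dbar_sys: "\<forall>\<omega>. H *v dbar \<omega> + transpose J *v ybar \<omega> = - gbar \<omega> \<and> J *v dbar \<omega> = - c"
    and dbar_meas: "dbar \<in> borel_measurable M"
    and d_sys: "H *v d + transpose J *v y = - g" "J *v d = - c"
    and params: "L > 0" "Gamma \<ge> 0" "0 < sgm" "sgm < 1" "0 < epsilon" "epsilon < 1"
      "0 < beta" "beta \<le> 1" "theta \<ge> 0"
    and event: "tau_min > 0" "xi_min > 0" "ereal tau_min \<le> tau_trial sgm c g H d"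
    and kappa_g: "kappa_g > 0" "norm g \<le> kappa_g"
    and alpha_meas: "alpha \<in> borel_measurable M"
    and alpha_range: "\<forall>\<omega>. beta * xi_min * tau_min / (tau_min * L + Gamma) \<le> alpha \<omega> \<and>
        alpha \<omega> \<le> beta * xi_min * tau_min / (tau_min * L + Gamma) + theta * beta\<^sup>2"
  shows "(\<integral>\<omega>. alpha \<omega> * tau_min * (g \<bullet> (dbar \<omega> - d)) \<partial>M)
           \<le> beta\<^sup>2 * theta * tau_min * kappa_g * kappa_d * sqrt Mv"
proof -
  interpret prob_space M by (rule prob)
  have bounded_inv: "norm p \<le> kappa_d * norm (kkt_op H J p)" for p
    using kkt_inv(2)[rule_format, of "fst p" "snd p"] by (simp add: kkt_op_def)
  have dbar_kkt: "kkt_solution H J c (gbar \<omega>) (dbar \<omega>) (ybar \<omega>)" for \<omega>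
    using dbar_sys by (simp add: kkt_solution_def)
  have d_kkt: "kkt_solution H J c (expectation gbar) d y"
    using d_sys gbar_unbiased by (simp add: kkt_solution_def)
  define N where "N \<omega> = norm (gbar \<omega> - g)" for \<omega>
  have err_bound: "\<bar>tau_min * (g \<bullet> (dbar \<omega> - d))\<bar> \<le> tau_min * (kappa_g * kappa_d * N \<omega>)" for \<omega>
    using kkt_step_diff_inner_le[OF bounded_inv dbar_kkt d_kkt kappa_g(2)] gbar_unbiased event(1)
    by (simp add: N_def abs_mult mult_left_mono)
  have N_int: "integrable M N"
    using gbar_int by (simp add: N_def[abs_def])
  have "expectation N \<le> sqrt (expectation (\<lambda>\<omega>. (N \<omega>)\<^sup>2))"
    using N_int var_int by (intro expectation_le_sqrt_second_moment) (simp_all add: N_def)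
  also have "\<dots> \<le> sqrt Mv"
    using var_bound by (simp add: N_def)
  finally have N_le: "expectation N \<le> sqrt Mv" .
  note err_mean_zero = kkt_step_error_inner_mean_zero[OF bounded_inv gbar_int dbar_kkt d_kkt, of g]
  have "expectation (\<lambda>\<omega>. alpha \<omega> * (tau_min * (g \<bullet> (dbar \<omega> - d))))
      \<le> theta * beta\<^sup>2 * expectation (\<lambda>\<omega>. tau_min * (kappa_g * kappa_d * N \<omega>))"
    using err_mean_zero N_int alpha_range err_bound
    by (intro integral_mult_mean_zero_le[OF _ _ _ _ alpha_meas,
          where a = "beta * xi_min * tau_min / (tau_min * L + Gamma)"]) simp_all
  also have "\<dots> = theta * beta\<^sup>2 * (tau_min * kappa_g * kappa_d) * expectation N"
    by (simp add: mult.assoc)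
  also have "\<dots> \<le> theta * beta\<^sup>2 * (tau_min * kappa_g * kappa_d) * sqrt Mv"
    using N_le params(9) event(1) kappa_g(1) kkt_inv(1) by (intro mult_left_mono) simp_all
  finally show ?thesis
    by (simp add: mult.assoc mult.left_commute)
qed

end
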